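(* Let $m>0$, $B_0\in\mathbb R$, and let $B_{[N]}\in\mathbb R^{N\times N}$ be the Jacobi matrix $$(B_{[N]}f)_n=-\xi_{n,n+1}f_{n+1}-\xi_{n-1,n}f_{n-1}+\Big(\eta_n+\tfrac{B_0^2}{2m}+\xi_{n,n+1}+\xi_{n-1,n}\Big)f_n,\quad n\in[N],$$ with $\eta_n>0$, $\xi_{n,n+1}>0$ and the convention $\xi_{0,1}=\xi_{N,N+1}=0$. Let $$A=\begin{pmatrix} i m^{-1}B_0 I_N & -m^{-1}I_N\\ B_{[N]} & -i m^{-1}B_0 I_N\end{pmatrix}\in\mathbb C^{2N\times 2N}.$$ Then to any eigenpair $(\lambda_j,v_j)$ of $B_{[N]}$ there correspond two eigenvalues of $A$, $$\mu_j^{\pm}=\pm\frac{i\sqrt{B_0^2+\lambda_j m}}{m},$$ with eigenvectors $$V_j^{\pm}=\frac{(v_j,u_j)^T}{|(v_j,u_j)^T|},\qquad u_j=i\Big(B_0\mp\sqrt{B_0^2+\lambda_j m}\Big)v_j.$$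
   Context: $A$ is the friction-free part (in a complex basis diagonalizing the magnetic coupling) of the drift matrix of a planar chain of $N$ charged harmonic oscillators of mass $m$ in a constant magnetic field $B_0$, with pinning parameters $\eta_n$ and nearest-neighbour couplings $\xi_{n,n+1}$. $[N]=\{1,\dots,N\}$. *)

theory Defs
  imports "Jordan_Normal_Form.Char_Poly"
begin

text \<open>Nearest-neighbour couplings with the boundary convention xi_{0,1} = xi_{N,N+1} = 0.
  xi k stands for xi_{k,k+1}.\<close>
definition xi_conv :: "nat \<Rightarrow> (nat \<Rightarrow> real) \<Rightarrow> nat \<Rightarrow> real" where
  "xi_conv N xi k = (if 1 \<le> k \<and> k < N then xi k else 0)"

text \<open>The Jacobi matrix B_[N] (0-based row/column i corresponds to site n = i+1).\<close>
definition jacobi_B :: "nat \<Rightarrow> real \<Rightarrow> real \<Rightarrow> (nat \<Rightarrow> real) \<Rightarrow> (nat \<Rightarrow> real) \<Rightarrow> real mat" where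
  "jacobi_B N m B0 eta xi = mat N N (\<lambda>(i,j).
     if i = j then eta (i+1) + B0\<^sup>2 / (2*m) + xi_conv N xi (i+1) + xi_conv N xi i
     else if j = i + 1 then - xi_conv N xi (i+1)
     else if i = j + 1 then - xi_conv N xi i
     else 0)"

definition drift_A :: "nat \<Rightarrow> real \<Rightarrow> real \<Rightarrow> (nat \<Rightarrow> real) \<Rightarrow> (nat \<Rightarrow> real) \<Rightarrow> complex mat" where
  "drift_A N m B0 eta xi = four_block_mat
     ((\<i> * complex_of_real (B0 / m)) \<cdot>\<^sub>m 1\<^sub>m N)
     ((- complex_of_real (1 / m)) \<cdot>\<^sub>m 1\<^sub>m N)
     (map_mat complex_of_real (jacobi_B N m B0 eta xi))
     ((- \<i> * complex_of_real (B0 / m)) \<cdot>\<^sub>m 1\<^sub>m N)"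

definition cvec_norm :: "complex vec \<Rightarrow> real" where
  "cvec_norm v = sqrt (\<Sum>i<dim_vec v. (cmod (v $ i))\<^sup>2)"

end

theory Submission
  imports Defs
begin

text \<open>
  The off-diagonal entries of B_[N] are nonpositive and its n-th row sums to
  eta_n + B0^2/(2m) > 0. Evaluating B v = lambda v at a coordinate where |v| is maximal
  therefore gives lambda > 0, so r = sqrt (B0^2 + lambda m) really satisfies
  r^2 = B0^2 + lambda m (Isabelle's sqrt of a negative number is minus the root of its absolute value).
  All blocks of A other than B_[N] are scalar, so A maps (v, gamma v) to
  ((alpha + beta gamma) v, (lambda + delta gamma) v); with gamma = i (B0 - s r) both
  coefficients equal mu = s i r / m because s^2 = 1 and r^2 = B0^2 + lambda m.
\<close>

lemma vec_max_abs_index: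
  fixes v :: "'a::linordered_idom vec"
  assumes v: "v \<in> carrier_vec n" "v \<noteq> 0\<^sub>v n"
  obtains i where "i < n" "v $ i \<noteq> 0" "\<And>j. j < n \<Longrightarrow> \<bar>v $ j\<bar> \<le> \<bar>v $ i\<bar>"
proof -
  from v obtain i0 where i0: "i0 < n" "v $ i0 \<noteq> 0" by force
  define M where "M = Max ((\<lambda>j. \<bar>v $ j\<bar>) ` {..<n})"
  have M_ge: "\<bar>v $ j\<bar> \<le> M" if "j < n" for j
    unfolding M_def using that by (intro Max_ge) auto
  have "M \<in> (\<lambda>j. \<bar>v $ j\<bar>) ` {..<n}"
    unfolding M_def using i0 by (intro Max_in) auto
  then obtain i where i: "i < n" "\<bar>v $ i\<bar> = M" by auto
  have "v $ i \<noteq> 0" using M_ge[OF i0(1)] i0(2) i(2) by auto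
  with i M_ge show ?thesis by (intro that) auto
qed

lemma ex_row_sum_le_eigenvalue:
  fixes B :: "'a::linordered_idom mat"
  assumes B: "B \<in> carrier_mat n n"
    and offdiag: "\<And>i j. i < n \<Longrightarrow> j < n \<Longrightarrow> i \<noteq> j \<Longrightarrow> B $$ (i, j) \<le> 0"
    and ev: "eigenvector B v lam"
  shows "\<exists>i<n. (\<Sum>j<n. B $$ (i, j)) \<le> lam"
proof -
  from ev B have v: "v \<in> carrier_vec n" "v \<noteq> 0\<^sub>v n" and Bv: "B *\<^sub>v v = lam \<cdot>\<^sub>v v"
    unfolding eigenvector_def by auto
  obtain i where i: "i < n" "v $ i \<noteq> 0" and max: "\<And>j. j < n \<Longrightarrow> \<bar>v $ j\<bar> \<le> \<bar>v $ i\<bar>"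
    using vec_max_abs_index[OF v] by blast
  have term_le: "B $$ (i, j) * (v $ i * v $ i) \<le> B $$ (i, j) * (v $ j * v $ i)" if j: "j < n" for j
  proof (cases "j = i")
    case False
    have "v $ j * v $ i \<le> \<bar>v $ j\<bar> * \<bar>v $ i\<bar>" by (metis abs_ge_self abs_mult)
    also have "\<dots> \<le> \<bar>v $ i\<bar> * \<bar>v $ i\<bar>" using max[OF j] by (rule mult_right_mono) simp
    also have "\<dots> = v $ i * v $ i" by (rule abs_mult_self_eq)
    finally show ?thesis using offdiag[OF i(1) j] False by (simp add: mult_left_mono_neg)
  qed simp
  have "(\<Sum>j<n. B $$ (i, j)) * (v $ i * v $ i) \<le> (\<Sum>j<n. B $$ (i, j) * (v $ j * v $ i))"
    unfolding sum_distrib_right using term_le by (intro sum_mono) simp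
  also have "\<dots> = (B *\<^sub>v v) $ i * v $ i"
    using i(1) v(1) B by (simp add: scalar_prod_def sum_distrib_right atLeast0LessThan mult.assoc)
  also have "\<dots> = lam * (v $ i * v $ i)"
    using Bv i(1) v(1) by simp
  finally have "(\<Sum>j<n. B $$ (i, j)) * (v $ i * v $ i) \<le> lam * (v $ i * v $ i)" .
  moreover have "0 < v $ i * v $ i"
    using i(2) by (auto simp: zero_less_mult_iff)
  ultimately show ?thesis
    using i(1) mult_right_le_imp_le by blast
qed

lemma eigenvector_smult:
  fixes A :: "'a::field mat"
  assumes A: "A \<in> carrier_mat n n" and ev: "eigenvector A v k" and c: "c \<noteq> 0"
  shows "eigenvector A (c \<cdot>\<^sub>v v) k"
proof -
  from ev A have v: "v \<in> carrier_vec n" "v \<noteq> 0\<^sub>v n" and Av: "A *\<^sub>v v = k \<cdot>\<^sub>v v"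
    unfolding eigenvector_def by auto
  from v obtain i where i: "i < n" "v $ i \<noteq> 0" by force
  have "(c \<cdot>\<^sub>v v) $ i \<noteq> 0"
    using i v(1) c by simp
  then have "c \<cdot>\<^sub>v v \<noteq> 0\<^sub>v n"
    using i(1) by auto
  moreover have "A *\<^sub>v (c \<cdot>\<^sub>v v) = k \<cdot>\<^sub>v (c \<cdot>\<^sub>v v)"
    using A v(1) by (simp add: mult_mat_vec Av smult_smult_assoc mult.commute)
  ultimately show ?thesis
    unfolding eigenvector_def using A v(1) by simp
qed

lemma smult_append_vec: "k \<cdot>\<^sub>v (v @\<^sub>v w) = (k \<cdot>\<^sub>v v) @\<^sub>v (k \<cdot>\<^sub>v w)"
  by (rule eq_vecI) (auto simp: append_vec_def Let_def)

lemma four_block_scalar_mat_mult_stacked_vec: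
  fixes B :: "'a::comm_ring_1 mat"
  assumes B: "B \<in> carrier_mat n n" and w: "w \<in> carrier_vec n"
  shows "four_block_mat (\<alpha> \<cdot>\<^sub>m 1\<^sub>m n) (\<beta> \<cdot>\<^sub>m 1\<^sub>m n) B (\<delta> \<cdot>\<^sub>m 1\<^sub>m n) *\<^sub>v (w @\<^sub>v \<gamma> \<cdot>\<^sub>v w)
    = ((\<alpha> + \<beta> * \<gamma>) \<cdot>\<^sub>v w) @\<^sub>v (B *\<^sub>v w + (\<delta> * \<gamma>) \<cdot>\<^sub>v w)"
proof -
  have "four_block_mat (\<alpha> \<cdot>\<^sub>m 1\<^sub>m n) (\<beta> \<cdot>\<^sub>m 1\<^sub>m n) B (\<delta> \<cdot>\<^sub>m 1\<^sub>m n) *\<^sub>v (w @\<^sub>v \<gamma> \<cdot>\<^sub>v w)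
      = (\<alpha> \<cdot>\<^sub>v w + \<beta> \<cdot>\<^sub>v (\<gamma> \<cdot>\<^sub>v w)) @\<^sub>v (B *\<^sub>v w + \<delta> \<cdot>\<^sub>v (\<gamma> \<cdot>\<^sub>v w))"
    using B w by (subst four_block_mat_mult_vec[of _ n n]) auto
  also have "\<dots> = ((\<alpha> + \<beta> * \<gamma>) \<cdot>\<^sub>v w) @\<^sub>v (B *\<^sub>v w + (\<delta> * \<gamma>) \<cdot>\<^sub>v w)"
    by (simp add: add_smult_distrib_vec smult_smult_assoc)
  finally show ?thesis .
qed

lemma four_block_scalar_mat_eigenvector:
  fixes B :: "'a::comm_ring_1 mat"
  assumes B: "B \<in> carrier_mat n n" and ev: "eigenvector B w lam"
    and top: "\<alpha> + \<beta> * \<gamma> = \<mu>" and bottom: "lam + \<delta> * \<gamma> = \<mu> * \<gamma>"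
  shows "eigenvector (four_block_mat (\<alpha> \<cdot>\<^sub>m 1\<^sub>m n) (\<beta> \<cdot>\<^sub>m 1\<^sub>m n) B (\<delta> \<cdot>\<^sub>m 1\<^sub>m n))
    (w @\<^sub>v \<gamma> \<cdot>\<^sub>v w) \<mu>"
proof -
  from ev B have w: "w \<in> carrier_vec n" "w \<noteq> 0\<^sub>v n" and Bw: "B *\<^sub>v w = lam \<cdot>\<^sub>v w"
    unfolding eigenvector_def by auto
  have "B *\<^sub>v w + (\<delta> * \<gamma>) \<cdot>\<^sub>v w = \<mu> \<cdot>\<^sub>v (\<gamma> \<cdot>\<^sub>v w)"
    unfolding Bw add_smult_distrib_vec[symmetric] smult_smult_assoc bottom ..
  then have "four_block_mat (\<alpha> \<cdot>\<^sub>m 1\<^sub>m n) (\<beta> \<cdot>\<^sub>m 1\<^sub>m n) B (\<delta> \<cdot>\<^sub>m 1\<^sub>m n) *\<^sub>v (w @\<^sub>v \<gamma> \<cdot>\<^sub>v w)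
      = \<mu> \<cdot>\<^sub>v (w @\<^sub>v \<gamma> \<cdot>\<^sub>v w)"
    unfolding four_block_scalar_mat_mult_stacked_vec[OF B w(1)] top
    by (simp add: smult_append_vec)
  moreover have "w @\<^sub>v \<gamma> \<cdot>\<^sub>v w \<noteq> 0\<^sub>v (n + n)"
  proof -
    from w obtain i where "i < n" "w $ i \<noteq> 0" by force
    then have "(w @\<^sub>v \<gamma> \<cdot>\<^sub>v w) $ i \<noteq> 0"
      using w(1) by simp
    then show ?thesis
      using \<open>i < n\<close> by auto
  qed
  ultimately show ?thesis
    unfolding eigenvector_def using B w(1) by simp
qed

lemma cvec_norm_eq_0_iff: "cvec_norm v = 0 \<longleftrightarrow> v = 0\<^sub>v (dim_vec v)"
proof -
  have "cvec_norm v = 0 \<longleftrightarrow> (\<forall>i\<in>{..<dim_vec v}. (cmod (v $ i))\<^sup>2 = 0)"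
    unfolding cvec_norm_def by (simp add: sum_nonneg_eq_0_iff)
  also have "\<dots> \<longleftrightarrow> v = 0\<^sub>v (dim_vec v)"
    by (auto simp: vec_eq_iff)
  finally show ?thesis .
qed

lemma xi_conv_nonneg:
  assumes "\<And>n. 1 \<le> n \<Longrightarrow> n < N \<Longrightarrow> xi n \<ge> 0"
  shows "xi_conv N xi k \<ge> 0"
  using assms unfolding xi_conv_def by simp

lemma jacobi_B_carrier: "jacobi_B N m B0 eta xi \<in> carrier_mat N N"
  unfolding jacobi_B_def by simp

lemma jacobi_B_offdiag_nonpos:
  assumes "\<And>n. 1 \<le> n \<Longrightarrow> n < N \<Longrightarrow> xi n \<ge> 0"
    and "i < N" "j < N" "i \<noteq> j"
  shows "jacobi_B N m B0 eta xi $$ (i, j) \<le> 0"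
  using assms xi_conv_nonneg[OF assms(1)] unfolding jacobi_B_def by simp

lemma jacobi_B_row_sum:
  assumes i: "i < N"
  shows "(\<Sum>j<N. jacobi_B N m B0 eta xi $$ (i, j)) = eta (i + 1) + B0\<^sup>2 / (2 * m)"
proof -
  define d where "d = eta (i + 1) + B0\<^sup>2 / (2 * m)"
  define a where "a = xi_conv N xi (i + 1)"
  define b where "b = xi_conv N xi i"
  have entry: "jacobi_B N m B0 eta xi $$ (i, j) =
      (if j = i then d + a + b else 0) - (if j = Suc i then a else 0) - (if Suc j = i then b else 0)"
    if "j < N" for j
    using i that unfolding jacobi_B_def d_def a_def b_def by auto
  \<comment> \<open>b = 0 in the first row and a = 0 in the last one, by the boundary convention of xi_conv\<close>
  have lower: "(\<Sum>j<N. if Suc j = i then b else 0) = b"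
  proof (cases i)
    case 0
    then show ?thesis by (simp add: b_def xi_conv_def)
  next
    case (Suc k)
    then show ?thesis using i by (simp add: sum.delta)
  qed
  have upper: "(\<Sum>j<N. if j = Suc i then a else 0) = a"
    by (simp add: sum.delta a_def xi_conv_def)
  show ?thesis
    using i by (simp add: entry sum.distrib sum_subtractf lower upper d_def)
qed

lemma jacobi_B_eigenvalue_pos:
  assumes m: "m > 0"
    and eta: "\<And>n. 1 \<le> n \<Longrightarrow> n \<le> N \<Longrightarrow> eta n > 0"
    and xi: "\<And>n. 1 \<le> n \<Longrightarrow> n < N \<Longrightarrow> xi n \<ge> 0"
    and ev: "eigenvector (jacobi_B N m B0 eta xi) v lam"
  shows "lam > 0"
proof -
  obtain i where i: "i < N" and "(\<Sum>j<N. jacobi_B N m B0 eta xi $$ (i, j)) \<le> lam"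
    using ex_row_sum_le_eigenvalue[OF jacobi_B_carrier jacobi_B_offdiag_nonpos[OF xi] ev]
    by blast
  then have "eta (i + 1) + B0\<^sup>2 / (2 * m) \<le> lam"
    by (simp add: jacobi_B_row_sum)
  moreover have "eta (i + 1) > 0" and "B0\<^sup>2 / (2 * m) \<ge> 0"
    using eta i m by simp_all
  ultimately show ?thesis
    by linarith
qed

lemma drift_A_carrier: "drift_A N m B0 eta xi \<in> carrier_mat (N + N) (N + N)"
  unfolding drift_A_def using jacobi_B_carrier by (intro four_block_carrier_mat) auto

theorem proposition2p2:
  fixes N :: nat and m B0 :: real and eta xi :: "nat \<Rightarrow> real"
    and lam :: real and v :: "real vec" and s :: real
  assumes m_pos: "m > 0"
    and eta_pos: "\<And>n. 1 \<le> n \<Longrightarrow> n \<le> N \<Longrightarrow> eta n > 0"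
    and xi_pos: "\<And>n. 1 \<le> n \<Longrightarrow> n < N \<Longrightarrow> xi n > 0"
    and eig: "eigenvector (jacobi_B N m B0 eta xi) v lam"
    and sign: "s = 1 \<or> s = -1"
  shows "let r = sqrt (B0\<^sup>2 + lam * m);
             mu = complex_of_real s * \<i> * complex_of_real r / complex_of_real m;
             vc = map_vec complex_of_real v;
             u = (\<i> * complex_of_real (B0 - s * r)) \<cdot>\<^sub>v vc;
             W = vc @\<^sub>v u;
             V = (1 / complex_of_real (cvec_norm W)) \<cdot>\<^sub>v W
         in eigenvector (drift_A N m B0 eta xi) V mu"
proof -
  define r where "r = sqrt (B0\<^sup>2 + lam * m)"
  define \<gamma> where "\<gamma> = \<i> * complex_of_real (B0 - s * r)"
  define \<mu> where "\<mu> = complex_of_real s * \<i> * complex_of_real r / complex_of_real m"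
  define W where "W = map_vec complex_of_real v @\<^sub>v \<gamma> \<cdot>\<^sub>v map_vec complex_of_real v"
  have "lam > 0"
    by (rule jacobi_B_eigenvalue_pos[OF m_pos eta_pos less_imp_le[OF xi_pos] eig])
  then have r_sq: "r\<^sup>2 = B0\<^sup>2 + lam * m"
    unfolding r_def using m_pos by simp
  have top: "\<i> * complex_of_real (B0 / m) + - complex_of_real (1 / m) * \<gamma> = \<mu>"
    unfolding \<gamma>_def \<mu>_def using m_pos by (simp add: field_simps)
  have real_bottom: "lam + B0 * (B0 - s * r) / m = - s * r * (B0 - s * r) / m"
    using m_pos r_sq sign by (auto simp: field_simps power2_eq_square)
  have bottom: "complex_of_real lam + - \<i> * complex_of_real (B0 / m) * \<gamma> = \<mu> * \<gamma>"
    unfolding \<gamma>_def \<mu>_def using arg_cong[OF real_bottom, of complex_of_real] m_pos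
    by (simp add: field_simps)
  have W_ev: "eigenvector (drift_A N m B0 eta xi) W \<mu>"
    unfolding drift_A_def W_def
    by (rule four_block_scalar_mat_eigenvector[OF map_carrier_mat[THEN iffD2, OF jacobi_B_carrier]
          of_real_hom.eigenvector_hom[OF jacobi_B_carrier eig] top bottom])
  moreover have "cvec_norm W \<noteq> 0"
    using W_ev drift_A_carrier unfolding eigenvector_def by (auto simp: cvec_norm_eq_0_iff)
  ultimately have "eigenvector (drift_A N m B0 eta xi) ((1 / complex_of_real (cvec_norm W)) \<cdot>\<^sub>v W) \<mu>"
    by (intro eigenvector_smult[OF drift_A_carrier]) auto
  then show ?thesis
    unfolding Let_def r_def[symmetric] \<gamma>_def[symmetric] \<mu>_def[symmetric] W_def[symmetric] .
qed

end
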